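(* Let $\mathcal{W}=(A,\to,\mathbb{S},\mathsf{f}_{\mathtt{NF}},\mathsf{Aggr})$ be a wARS, let $a\in A$, and let $\mathfrak{T}$ be an $(A,\to)$-reduction tree of finite depth whose root $r$ and some leaf $v_0\neq r$ are both labeled with $a$. Let $t\in S$ satisfy $\bigoplus_{i=1}^{\infty}t=\top$. If $\mathcal{P}_{v_0}(\mathfrak{T})(s)\succcurlyeq s\oplus t$ for all $s\in S$, then $[\![a]\!]=\top$.
   Context: A semiring $\mathbb{S}=(S,\oplus,\odot,\mathbf{0},\mathbf{1})$: $(S,\oplus,\mathbf{0})$ commutative monoid, $(S,\odot,\mathbf{1})$ monoid, $\odot$ distributes over $\oplus$, $\mathbf{0}$ annihilator. Natural order: $s\preccurlyeq t$ iff $s\oplus u=t$ for some $u$. A complete lattice semiring is one where $\preccurlyeq$ is antisymmetric and every subset $T\subseteq S$ has a least upper bound $\bigsqcup T$; $\top=\bigsqcup S$. For an infinite sequence, $\bigoplus_{i=1}^\infty s_i=\bigsqcup\{s_1\oplus\cdots\oplus s_n\mid n\ge1\}$, and similarly for infinite products. $\mathrm{Seq}(X)$: non-empty finite or infinite sequences over $X$. An sARS is $(A,\to)$ with $\to\subseteq A\times\mathrm{Seq}(A)$; $\mathtt{NF}_\to$ is the set of $a$ with no $B$ such that $a\to B$. An $(A,\to)$-reduction tree (RT) is a labeled ordered tree whose nodes $v$ carry labels $a_v\in A$ and whose ordered child sequence $vE$ is either empty or satisfies $a_v\to[a_w\mid w\in vE]$. Aggregators: smallest set containing constants $s\in S$,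 variables $v_1,v_2,\dots$, and $\bigoplus F$, $\bigodot F$ for non-empty finite or infinite sequences $F$ of aggregators; they induce functions by substituting the $i$-th argument for $v_i$. A wARS $(A,\to,\mathbb{S},\mathsf{f}_{\mathtt{NF}},\mathsf{Aggr})$ consists of an sARS, a complete lattice semiring $\mathbb{S}$, a map $\mathsf{f}_{\mathtt{NF}}:\mathtt{NF}_\to\to S$, and for each $a\to B$ an aggregator $\mathsf{Aggr}_{a\to B}$ with variable indices $\le|B|$, viewed as a function $S^{|B|}\to S$. Weight of a finite-depth RT $\mathfrak{T}$ at node $v$: $\mathsf{f}_{\mathtt{NF}}(a_v)$ if $a_v\in\mathtt{NF}_\to$; $\mathbf{0}$ if $v$ is a leaf with $a_v\notin\mathtt{NF}_\to$; $\mathsf{Aggr}_{a_v\to B}[$weights of the children in order$]$ with $B=[a_w\mid w\in vE]$ otherwise; $[\![\mathfrak{T}]\!]$ is the weight at the root. $[\![a]\!]=\bigsqcup\{[\![\mathfrak{T}]\!]\mid\mathfrak{T}$ a finite-depth RT with root labeled $a\}$. Induced weight polynomial: for a finite-depth RT $\mathfrak{T}$ with a leaf $v_0$ and a variable $X$, define $[\![\mathfrak{T}]\!]^{v_0}_{v_0}=X$; for $v\neq v_0$ with $a_v\in\mathtt{NF}_\to$, $[\![\mathfrak{T}]\!]^{v_0}_v=\mathsf{f}_{\mathtt{NF}}(a_v)$; for a leaf $v\neq v_0$ with $a_v\notin\mathtt{NF}_\to$, $[\![\mathfrak{T}]\!]^{v_0}_v=\mathbf{0}$; for an inner node $v$,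 $[\![\mathfrak{T}]\!]^{v_0}_v=\mathsf{Aggr}_{a_v\to B}[[\![\mathfrak{T}]\!]^{v_0}_w\mid w\in vE]$ with $B=[a_w\mid w\in vE]$. Then $\mathcal{P}_{v_0}(\mathfrak{T})=[\![\mathfrak{T}]\!]^{v_0}_r$ (with $r$ the root) is an expression in $X$, and $\mathcal{P}_{v_0}(\mathfrak{T})(s)$ denotes its value when $X$ is replaced by $s\in S$. *)

theory Defs
  imports Main "HOL-Library.Extended_Nat"
begin

record 's sr_ops =
  sadd :: "'s \<Rightarrow> 's \<Rightarrow> 's"
  smul :: "'s \<Rightarrow> 's \<Rightarrow> 's"
  szero :: 's
  sone :: 's

definition is_semiring :: "'s sr_ops \<Rightarrow> bool" where
  "is_semiring R \<longleftrightarrow>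
     (\<forall>x y z. sadd R (sadd R x y) z = sadd R x (sadd R y z)) \<and>
     (\<forall>x y. sadd R x y = sadd R y x) \<and>
     (\<forall>x. sadd R (szero R) x = x) \<and>
     (\<forall>x y z. smul R (smul R x y) z = smul R x (smul R y z)) \<and>
     (\<forall>x. smul R (sone R) x = x \<and> smul R x (sone R) = x) \<and>
     (\<forall>x y z. smul R x (sadd R y z) = sadd R (smul R x y) (smul R x z)) \<and>
     (\<forall>x y z. smul R (sadd R x y) z = sadd R (smul R x z) (smul R y z)) \<and>
     (\<forall>x. smul R (szero R) x = szero R \<and> smul R x (szero R) = szero R)"

definition nle :: "'s sr_ops \<Rightarrow> 's \<Rightarrow> 's \<Rightarrow> bool" where
  "nle R s t \<longleftrightarrow> (\<exists>u. sadd R s u = t)"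

definition is_lub :: "'s sr_ops \<Rightarrow> 's set \<Rightarrow> 's \<Rightarrow> bool" where
  "is_lub R T x \<longleftrightarrow> (\<forall>y\<in>T. nle R y x) \<and> (\<forall>z. (\<forall>y\<in>T. nle R y z) \<longrightarrow> nle R x z)"

definition Lub :: "'s sr_ops \<Rightarrow> 's set \<Rightarrow> 's" where
  "Lub R T = (THE x. is_lub R T x)"

definition Top :: "'s sr_ops \<Rightarrow> 's" where
  "Top R = Lub R UNIV"

definition complete_lattice_semiring :: "'s sr_ops \<Rightarrow> bool" where
  "complete_lattice_semiring R \<longleftrightarrow> is_semiring R \<and>
     (\<forall>s t. nle R s t \<longrightarrow> nle R t s \<longrightarrow> s = t) \<and>
     (\<forall>T. \<exists>x. is_lub R T x)"

datatype 'x seq = FinSeq "'x list" | InfSeq "nat \<Rightarrow> 'x"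

fun seq_ok :: "'x seq \<Rightarrow> bool" where
  "seq_ok (FinSeq xs) = (xs \<noteq> [])"
| "seq_ok (InfSeq f) = True"

fun seq_len :: "'x seq \<Rightarrow> enat" where
  "seq_len (FinSeq xs) = enat (length xs)"
| "seq_len (InfSeq f) = \<infinity>"

text \<open>0-based access\<close>
fun seq_nth :: "'x seq \<Rightarrow> nat \<Rightarrow> 'x" where
  "seq_nth (FinSeq xs) i = xs ! i"
| "seq_nth (InfSeq f) i = f i"

fun ssum :: "'s sr_ops \<Rightarrow> 's seq \<Rightarrow> 's" where
  "ssum R (FinSeq xs) = foldr (sadd R) xs (szero R)"
| "ssum R (InfSeq f) = Lub R {foldr (sadd R) (map f [0..<n]) (szero R) | n. n \<ge> 1}"

fun sprod :: "'s sr_ops \<Rightarrow> 's seq \<Rightarrow> 's" where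
  "sprod R (FinSeq xs) = foldr (smul R) xs (sone R)"
| "sprod R (InfSeq f) = Lub R {foldr (smul R) (map f [0..<n]) (sone R) | n. n \<ge> 1}"

definition inf_sum_const :: "'s sr_ops \<Rightarrow> 's \<Rightarrow> 's" where
  "inf_sum_const R t = ssum R (InfSeq (\<lambda>_. t))"

text \<open>\<open>AVar i\<close> stands for the variable v_i (1-based).\<close>
datatype 's aggr = AConst 's | AVar nat | ASum "'s aggr seq" | AProd "'s aggr seq"

inductive aggr_wf :: "enat \<Rightarrow> 's aggr \<Rightarrow> bool" for n where
  "aggr_wf n (AConst s)"
| "1 \<le> i \<Longrightarrow> enat i \<le> n \<Longrightarrow> aggr_wf n (AVar i)"
| "seq_ok F \<Longrightarrow> \<forall>g\<in>set_seq F. aggr_wf n g \<Longrightarrow> aggr_wf n (ASum F)"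
| "seq_ok F \<Longrightarrow> \<forall>g\<in>set_seq F. aggr_wf n g \<Longrightarrow> aggr_wf n (AProd F)"

primrec aeval :: "'s sr_ops \<Rightarrow> 's aggr \<Rightarrow> (nat \<Rightarrow> 's) \<Rightarrow> 's" where
  "aeval R (AConst s) = (\<lambda>\<sigma>. s)"
| "aeval R (AVar i) = (\<lambda>\<sigma>. \<sigma> i)"
| "aeval R (ASum F) = (\<lambda>\<sigma>. ssum R (map_seq (\<lambda>h. h \<sigma>) (map_seq (aeval R) F)))"
| "aeval R (AProd F) = (\<lambda>\<sigma>. sprod R (map_seq (\<lambda>h. h \<sigma>) (map_seq (aeval R) F)))"

definition NF :: "('a \<Rightarrow> 'a seq \<Rightarrow> bool) \<Rightarrow> 'a set" where
  "NF step = {a. \<not> (\<exists>B. step a B)}"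

definition is_wARS ::
  "('a \<Rightarrow> 'a seq \<Rightarrow> bool) \<Rightarrow> 's sr_ops \<Rightarrow> ('a \<Rightarrow> 's) \<Rightarrow> ('a \<Rightarrow> 'a seq \<Rightarrow> 's aggr) \<Rightarrow> bool" where
  "is_wARS step R fNF Aggr \<longleftrightarrow>
     (\<forall>a B. step a B \<longrightarrow> seq_ok B) \<and>
     complete_lattice_semiring R \<and>
     (\<forall>a B. step a B \<longrightarrow> aggr_wf (seq_len B) (Aggr a B))"

text \<open>Labeled ordered trees; a leaf has the empty child sequence, an inner node a non-empty one.
  Nodes are addressed by paths (lists of 0-based child indices), the root by [].\<close>
datatype 'a tree = Leaf 'a | Inner 'a "'a tree seq"

fun label :: "'a tree \<Rightarrow> 'a" where
  "label (Leaf a) = a"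
| "label (Inner a F) = a"

inductive is_rt :: "('a \<Rightarrow> 'a seq \<Rightarrow> bool) \<Rightarrow> 'a tree \<Rightarrow> bool" for step where
  "is_rt step (Leaf a)"
| "seq_ok F \<Longrightarrow> step a (map_seq label F) \<Longrightarrow> \<forall>c\<in>set_seq F. is_rt step c \<Longrightarrow> is_rt step (Inner a F)"

inductive depth_le :: "nat \<Rightarrow> 'a tree \<Rightarrow> bool" where
  "depth_le n (Leaf a)"
| "\<forall>c\<in>set_seq F. depth_le n c \<Longrightarrow> depth_le (Suc n) (Inner a F)"

definition finite_depth :: "'a tree \<Rightarrow> bool" where
  "finite_depth T \<longleftrightarrow> (\<exists>n. depth_le n T)"

primrec subtree_at :: "'a tree \<Rightarrow> nat list \<Rightarrow> 'a tree option" where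
  "subtree_at (Leaf a) = (\<lambda>p. if p = [] then Some (Leaf a) else None)"
| "subtree_at (Inner a F) = (\<lambda>p. case p of [] \<Rightarrow> Some (Inner a F)
      | i # q \<Rightarrow> if enat i < seq_len F then seq_nth (map_seq subtree_at F) i q else None)"

primrec wt_gen :: "'s sr_ops \<Rightarrow> ('a \<Rightarrow> 'a seq \<Rightarrow> 's aggr) \<Rightarrow> 'a tree \<Rightarrow> (nat list \<Rightarrow> 'a \<Rightarrow> 's) \<Rightarrow> 's" where
  "wt_gen R Aggr (Leaf a) = (\<lambda>lv. lv [] a)"
| "wt_gen R Aggr (Inner a F) = (\<lambda>lv. aeval R (Aggr a (map_seq label F))
      (\<lambda>i. seq_nth (map_seq (wt_gen R Aggr) F) (i - 1) (\<lambda>p. lv ((i - 1) # p))))"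

definition leaf_val :: "('a \<Rightarrow> 'a seq \<Rightarrow> bool) \<Rightarrow> 's sr_ops \<Rightarrow> ('a \<Rightarrow> 's) \<Rightarrow> 'a \<Rightarrow> 's" where
  "leaf_val step R fNF a = (if a \<in> NF step then fNF a else szero R)"

definition weight ::
  "('a \<Rightarrow> 'a seq \<Rightarrow> bool) \<Rightarrow> 's sr_ops \<Rightarrow> ('a \<Rightarrow> 's) \<Rightarrow> ('a \<Rightarrow> 'a seq \<Rightarrow> 's aggr) \<Rightarrow> 'a tree \<Rightarrow> 's" where
  "weight step R fNF Aggr T = wt_gen R Aggr T (\<lambda>p a. leaf_val step R fNF a)"

definition weight_poly ::
  "('a \<Rightarrow> 'a seq \<Rightarrow> bool) \<Rightarrow> 's sr_ops \<Rightarrow> ('a \<Rightarrow> 's) \<Rightarrow> ('a \<Rightarrow> 'a seq \<Rightarrow> 's aggr) \<Rightarrow> 'a tree \<Rightarrow> nat list \<Rightarrow> 's \<Rightarrow> 's" where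
  "weight_poly step R fNF Aggr T v0 s =
     wt_gen R Aggr T (\<lambda>p a. if p = v0 then s else leaf_val step R fNF a)"

definition sem ::
  "('a \<Rightarrow> 'a seq \<Rightarrow> bool) \<Rightarrow> 's sr_ops \<Rightarrow> ('a \<Rightarrow> 's) \<Rightarrow> ('a \<Rightarrow> 'a seq \<Rightarrow> 's aggr) \<Rightarrow> 'a \<Rightarrow> 's" where
  "sem step R fNF Aggr a = Lub R {weight step R fNF Aggr T | T. is_rt step T \<and> finite_depth T \<and> label T = a}"

end

theory Submission
  imports Defs
begin

(* Grafting T into its own leaf v0, which carries the root label a, and iterating this from the
   one-node tree a produces finite-depth reduction trees for a. Grafting X at v0 gives a tree of
   weight P_v0(T)([[X]]), so by the hypothesis on P_v0(T) the n-th iterate has weight at least the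
   n-fold sum t + ... + t. Hence [[a]] bounds every partial sum of the infinite sum of t, and so
   [[a]] is at least its supremum, which is Top. *)

fun seq_mapi :: "(nat \<Rightarrow> 'x \<Rightarrow> 'y) \<Rightarrow> 'x seq \<Rightarrow> 'y seq" where
  "seq_mapi f (FinSeq xs) = FinSeq (map2 f [0..<length xs] xs)"
| "seq_mapi f (InfSeq h) = InfSeq (\<lambda>i. f i (h i))"

lemma seq_len_seq_mapi [simp]: "seq_len (seq_mapi f S) = seq_len S"
  by (cases S) auto

lemma seq_ok_seq_mapi [simp]: "seq_ok (seq_mapi f S) = seq_ok S"
  by (cases S) auto

lemma seq_len_map_seq [simp]: "seq_len (map_seq f S) = seq_len S"
  by (cases S) auto

lemma seq_ok_map_seq [simp]: "seq_ok (map_seq f S) = seq_ok S"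
  by (cases S) auto

lemma seq_nth_seq_mapi: "enat i < seq_len S \<Longrightarrow> seq_nth (seq_mapi f S) i = f i (seq_nth S i)"
  by (cases S) auto

lemma seq_nth_map_seq: "enat i < seq_len S \<Longrightarrow> seq_nth (map_seq f S) i = f (seq_nth S i)"
  by (cases S) auto

lemma set_seq_eq_seq_nth: "set_seq S = {seq_nth S i | i. enat i < seq_len S}"
  by (cases S) (auto simp: in_set_conv_nth)

lemma nth_beyond_length:
  assumes "length xs = length ys" and "length xs \<le> i"
  shows "xs ! i = ys ! i"
  using assms nth_append_right[of xs i "[]"] nth_append_right[of ys i "[]"] by simp

lemma seq_nth_beyond_length:
  assumes "seq_len S = seq_len S'" and "\<not> enat i < seq_len S"
  shows "seq_nth S i = seq_nth S' i"
  using assms by (cases S; cases S') (auto intro: nth_beyond_length)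

lemma seq_eqI:
  assumes "seq_len S = seq_len S'" and "\<And>i. enat i < seq_len S \<Longrightarrow> seq_nth S i = seq_nth S' i"
  shows "S = S'"
  using assms by (cases S; cases S') (auto intro: nth_equalityI)

lemma subtree_at_Nil [simp]: "subtree_at T [] = Some T"
  by (cases T) auto

primrec subst_leaves :: "'a tree \<Rightarrow> (nat list \<Rightarrow> 'a tree option) \<Rightarrow> 'a tree" where
  "subst_leaves (Leaf b) = (\<lambda>g. case g [] of None \<Rightarrow> Leaf b | Some X \<Rightarrow> X)"
| "subst_leaves (Inner b F) =
     (\<lambda>g. Inner b (seq_mapi (\<lambda>i h. h (\<lambda>p. g (i # p))) (map_seq subst_leaves F)))"

definition subst_fits :: "'a tree \<Rightarrow> (nat list \<Rightarrow> 'a tree option) \<Rightarrow> bool" where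
  "subst_fits T g \<longleftrightarrow> (\<forall>p X. g p = Some X \<longrightarrow> subtree_at T p = Some (Leaf (label X)))"

lemma subst_fits_Nil: "subst_fits T g \<Longrightarrow> g [] = Some X \<Longrightarrow> T = Leaf (label X)"
  unfolding subst_fits_def by (metis option.inject subtree_at_Nil)

lemma subst_fits_child:
  assumes "subst_fits (Inner b F) g" and "enat i < seq_len F"
  shows "subst_fits (seq_nth F i) (\<lambda>p. g (i # p))"
  unfolding subst_fits_def
proof (intro allI impI)
  fix p X assume "g (i # p) = Some X"
  then have "subtree_at (Inner b F) (i # p) = Some (Leaf (label X))"
    using assms(1) unfolding subst_fits_def by blast
  with assms(2) show "subtree_at (seq_nth F i) p = Some (Leaf (label X))"
    by (simp add: seq_nth_map_seq)
qed

lemma subst_fits_beyond_length: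
  assumes "subst_fits (Inner b F) g" and "\<not> enat i < seq_len F"
  shows "g (i # p) = None"
proof (rule ccontr)
  assume "g (i # p) \<noteq> None"
  with assms show False
    unfolding subst_fits_def by fastforce
qed

lemma seq_nth_subst_leaves_children:
  "enat i < seq_len F \<Longrightarrow>
     seq_nth (seq_mapi (\<lambda>i h. h (\<lambda>p. g (i # p))) (map_seq subst_leaves F)) i
       = subst_leaves (seq_nth F i) (\<lambda>p. g (i # p))"
  by (simp add: seq_nth_seq_mapi seq_nth_map_seq)

lemma set_seq_subst_leaves_children:
  "set_seq (seq_mapi (\<lambda>i h. h (\<lambda>p. g (i # p))) (map_seq subst_leaves F))
     = {subst_leaves (seq_nth F i) (\<lambda>p. g (i # p)) | i. enat i < seq_len F}"
  unfolding set_seq_eq_seq_nth[of "seq_mapi _ _"] by (force simp: seq_nth_subst_leaves_children)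

lemma label_subst_leaves: "subst_fits T g \<Longrightarrow> label (subst_leaves T g) = label T"
  by (cases T) (auto dest: subst_fits_Nil split: option.split)

lemma map_label_subst_leaves_children:
  assumes "subst_fits (Inner b F) g"
  shows "map_seq label (seq_mapi (\<lambda>i h. h (\<lambda>p. g (i # p))) (map_seq subst_leaves F))
    = map_seq label F"
  by (rule seq_eqI)
    (simp_all add: seq_nth_map_seq seq_nth_subst_leaves_children label_subst_leaves
      subst_fits_child[OF assms])

lemma wt_gen_subst_leaves:
  "subst_fits T g \<Longrightarrow> wt_gen R Aggr (subst_leaves T g) lv = wt_gen R Aggr T
     (\<lambda>p b. case g p of None \<Rightarrow> lv p b | Some X \<Rightarrow> wt_gen R Aggr X (\<lambda>q. lv (p @ q)))"
proof (induction T arbitrary: g lv)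
  case (Leaf b)
  then show ?case by (cases "g []") (auto dest: subst_fits_Nil)
next
  case (Inner b F)
  define F' where "F' = seq_mapi (\<lambda>i h. h (\<lambda>p. g (i # p))) (map_seq subst_leaves F)"
  define lv' where
    "lv' = (\<lambda>p b. case g p of None \<Rightarrow> lv p b | Some X \<Rightarrow> wt_gen R Aggr X (\<lambda>q. lv (p @ q)))"
  have children: "seq_nth (map_seq (wt_gen R Aggr) F') j (\<lambda>p. lv (j # p))
      = seq_nth (map_seq (wt_gen R Aggr) F) j (\<lambda>p. lv' (j # p))" for j
  proof (cases "enat j < seq_len F")
    case True
    then have "seq_nth F j \<in> set_seq F" by (auto simp: set_seq_eq_seq_nth)
    with True show ?thesis
      using Inner.IH[OF _ subst_fits_child[OF Inner.prems True]]
      by (simp add: F'_def lv'_def seq_nth_map_seq seq_nth_subst_leaves_children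
          cong: option.case_cong)
  next
    case False
    \<comment> \<open>The aggregator may read variables beyond the children; both sides then evaluate
      the same junk element of equally long child sequences.\<close>
    then have "(\<lambda>p. lv' (j # p)) = (\<lambda>p. lv (j # p))"
      using subst_fits_beyond_length[OF Inner.prems] by (simp add: lv'_def)
    moreover have "seq_nth (map_seq (wt_gen R Aggr) F') j = seq_nth (map_seq (wt_gen R Aggr) F) j"
      using False by (intro seq_nth_beyond_length) (simp_all add: F'_def)
    ultimately show ?thesis by simp
  qed
  have "map_seq label F' = map_seq label F"
    unfolding F'_def by (rule map_label_subst_leaves_children[OF Inner.prems])
  then show ?case
    by (simp only: subst_leaves.simps wt_gen.simps F'_def[symmetric] lv'_def[symmetric] children)
qed

lemma is_rt_subst_leaves:
  assumes "is_rt step T" and "subst_fits T g" and "\<And>p X. g p = Some X \<Longrightarrow> is_rt step X"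
  shows "is_rt step (subst_leaves T g)"
  using assms
proof (induction T arbitrary: g rule: is_rt.induct)
  case (1 b)
  then show ?case by (cases "g []") (auto intro: is_rt.intros)
next
  case (2 F b)
  have "is_rt step (subst_leaves (seq_nth F i) (\<lambda>p. g (i # p)))" if "enat i < seq_len F" for i
    using that "2.IH" "2.prems" subst_fits_child[OF "2.prems"(1) that]
    by (auto simp: set_seq_eq_seq_nth)
  then show ?case
    using "2.hyps" map_label_subst_leaves_children[OF "2.prems"(1)]
    by (auto intro!: is_rt.intros simp: set_seq_subst_leaves_children)
qed

lemma depth_le_mono: "depth_le n T \<Longrightarrow> n \<le> k \<Longrightarrow> depth_le k T"
proof (induction n T arbitrary: k rule: depth_le.induct)
  case (1 n a)
  show ?case by (rule depth_le.intros)
next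
  case (2 F n a)
  then obtain k' where "k = Suc k'" and "n \<le> k'" by (cases k) auto
  with "2.IH" show ?case by (auto intro: depth_le.intros)
qed

lemma depth_le_subst_leaves:
  assumes "depth_le n T" and "\<And>p X. g p = Some X \<Longrightarrow> depth_le m X"
  shows "depth_le (n + m) (subst_leaves T g)"
  using assms
proof (induction n T arbitrary: g rule: depth_le.induct)
  case (1 n b)
  then show ?case by (cases "g []") (auto intro: depth_le.intros depth_le_mono[of m _ "n + m"])
next
  case (2 F n b)
  have "depth_le (n + m) (subst_leaves (seq_nth F i) (\<lambda>p. g (i # p)))" if "enat i < seq_len F" for i
    using that "2.IH" "2.prems" by (auto simp: set_seq_eq_seq_nth)
  then show ?case by (auto intro!: depth_le.intros simp: set_seq_subst_leaves_children)
qed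

definition graft :: "'a tree \<Rightarrow> nat list \<Rightarrow> 'a tree \<Rightarrow> 'a tree" where
  "graft T v X = subst_leaves T (\<lambda>p. if p = v then Some X else None)"

lemma subst_fits_graft:
  "subtree_at T v = Some (Leaf (label X)) \<Longrightarrow> subst_fits T (\<lambda>p. if p = v then Some X else None)"
  unfolding subst_fits_def by simp

lemma label_graft: "subtree_at T v = Some (Leaf (label X)) \<Longrightarrow> label (graft T v X) = label T"
  unfolding graft_def by (simp add: label_subst_leaves subst_fits_graft)

lemma is_rt_graft:
  "is_rt step T \<Longrightarrow> is_rt step X \<Longrightarrow> subtree_at T v = Some (Leaf (label X))
     \<Longrightarrow> is_rt step (graft T v X)"
  unfolding graft_def by (rule is_rt_subst_leaves) (auto simp: subst_fits_graft split: if_splits)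

lemma finite_depth_graft:
  assumes "finite_depth T" and "finite_depth X"
  shows "finite_depth (graft T v X)"
proof -
  obtain n m where "depth_le n T" and "depth_le m X"
    using assms unfolding finite_depth_def by blast
  then have "depth_le (n + m) (graft T v X)"
    unfolding graft_def by (auto intro: depth_le_subst_leaves split: if_splits)
  then show ?thesis
    unfolding finite_depth_def by blast
qed

lemma weight_graft:
  assumes "subtree_at T v = Some (Leaf (label X))"
  shows "weight step R fNF Aggr (graft T v X)
    = weight_poly step R fNF Aggr T v (weight step R fNF Aggr X)"
  unfolding weight_def weight_poly_def graft_def wt_gen_subst_leaves[OF subst_fits_graft[OF assms]]
  by (rule arg_cong[where f = "wt_gen R Aggr T"]) auto

lemma label_funpow_graft:
  assumes "subtree_at T v = Some (Leaf (label T))"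
  shows "label ((graft T v ^^ n) (Leaf (label T))) = label T"
  by (induction n) (simp_all add: label_graft assms)

lemma is_rt_funpow_graft:
  assumes "is_rt step T" and "subtree_at T v = Some (Leaf (label T))"
  shows "is_rt step ((graft T v ^^ n) (Leaf (label T)))"
  by (induction n) (simp_all add: is_rt.intros is_rt_graft assms label_funpow_graft)

lemma finite_depth_funpow_graft:
  assumes "finite_depth T"
  shows "finite_depth ((graft T v ^^ n) (Leaf b))"
  by (induction n)
    (simp_all add: finite_depth_graft assms finite_depth_def[of "Leaf b"] depth_le.intros(1))

lemma sadd_commute: "is_semiring R \<Longrightarrow> sadd R x y = sadd R y x"
  unfolding is_semiring_def by blast

lemma nle_szero: "is_semiring R \<Longrightarrow> nle R (szero R) x"
  unfolding is_semiring_def nle_def by blast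

lemma nle_trans: "is_semiring R \<Longrightarrow> nle R x y \<Longrightarrow> nle R y z \<Longrightarrow> nle R x z"
  unfolding is_semiring_def nle_def by metis

lemma nle_sadd_left: "is_semiring R \<Longrightarrow> nle R x y \<Longrightarrow> nle R (sadd R t x) (sadd R t y)"
  unfolding is_semiring_def nle_def by metis

lemma nle_antisym: "complete_lattice_semiring R \<Longrightarrow> nle R x y \<Longrightarrow> nle R y x \<Longrightarrow> x = y"
  unfolding complete_lattice_semiring_def by blast

lemma is_lub_unique:
  "complete_lattice_semiring R \<Longrightarrow> is_lub R S x \<Longrightarrow> is_lub R S y \<Longrightarrow> x = y"
  unfolding is_lub_def by (blast intro: nle_antisym)

lemma Lub_is_lub:
  assumes "complete_lattice_semiring R"
  shows "is_lub R S (Lub R S)"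
proof -
  obtain x where x: "is_lub R S x"
    using assms unfolding complete_lattice_semiring_def by blast
  have "y = x" if "is_lub R S y" for y
    using is_lub_unique[OF assms that x] .
  then show ?thesis
    unfolding Lub_def by (rule theI[where P = "is_lub R S", OF x])
qed

lemma nle_Top: "complete_lattice_semiring R \<Longrightarrow> nle R x (Top R)"
  using Lub_is_lub[of R UNIV] unfolding Top_def is_lub_def by simp

lemma Lub_le_Lub:
  assumes "complete_lattice_semiring R" and "\<And>x. x \<in> A \<Longrightarrow> \<exists>y\<in>B. nle R x y"
  shows "nle R (Lub R A) (Lub R B)"
proof -
  have "is_semiring R"
    using assms(1) unfolding complete_lattice_semiring_def by blast
  moreover have "\<forall>y\<in>B. nle R y (Lub R B)"
    using Lub_is_lub[OF assms(1), of B] unfolding is_lub_def by simp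
  ultimately have "\<forall>x\<in>A. nle R x (Lub R B)"
    using assms(2) nle_trans by metis
  then show ?thesis
    using Lub_is_lub[OF assms(1), of A] unfolding is_lub_def by simp
qed

lemma weight_funpow_graft_ge:
  assumes "is_semiring R" and "subtree_at T v = Some (Leaf (label T))"
    and "\<forall>s. nle R (sadd R s t) (weight_poly step R fNF Aggr T v s)"
  shows "nle R (foldr (sadd R) (replicate n t) (szero R))
    (weight step R fNF Aggr ((graft T v ^^ n) (Leaf (label T))))"
proof (induction n)
  case 0
  show ?case by (simp add: nle_szero assms(1))
next
  case (Suc n)
  note nle_trans[OF assms(1), trans]
  define X where "X = (graft T v ^^ n) (Leaf (label T))"
  have "nle R (foldr (sadd R) (replicate (Suc n) t) (szero R)) (sadd R t (weight step R fNF Aggr X))"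
    using Suc nle_sadd_left[OF assms(1)] by (simp add: X_def)
  also have "sadd R t (weight step R fNF Aggr X) = sadd R (weight step R fNF Aggr X) t"
    by (rule sadd_commute[OF assms(1)])
  also have "nle R \<dots> (weight_poly step R fNF Aggr T v (weight step R fNF Aggr X))"
    using assms(3) by blast
  also have "\<dots> = weight step R fNF Aggr (graft T v X)"
    using weight_graft assms(2) label_funpow_graft[OF assms(2)] by (metis X_def)
  finally show ?case by (simp add: X_def)
qed

lemma Lub_eq_Top_if_above_multiples:
  assumes "complete_lattice_semiring R" and "inf_sum_const R t = Top R"
    and "\<And>n. \<exists>y\<in>B. nle R (foldr (sadd R) (replicate n t) (szero R)) y"
  shows "Lub R B = Top R"
proof (rule nle_antisym[OF assms(1) nle_Top[OF assms(1)]])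
  have "nle R (inf_sum_const R t) (Lub R B)"
    unfolding inf_sum_const_def ssum.simps
    by (rule Lub_le_Lub[OF assms(1)])
      (auto simp: map_replicate_trivial assms(3) simp del: foldr_replicate)
  then show "nle R (Top R) (Lub R B)"
    by (simp only: assms(2))
qed

theorem theorem41:
  fixes step :: "'a \<Rightarrow> 'a seq \<Rightarrow> bool"
    and R :: "'s sr_ops"
    and fNF :: "'a \<Rightarrow> 's"
    and Aggr :: "'a \<Rightarrow> 'a seq \<Rightarrow> 's aggr"
    and a :: 'a and T :: "'a tree" and v0 :: "nat list" and t :: 's
  assumes "is_wARS step R fNF Aggr"
    and "is_rt step T" and "finite_depth T"
    and "label T = a"
    and "v0 \<noteq> []" and "subtree_at T v0 = Some (Leaf a)"
    and "inf_sum_const R t = Top R"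
    and "\<forall>s. nle R (sadd R s t) (weight_poly step R fNF Aggr T v0 s)"
  shows "sem step R fNF Aggr a = Top R"
  unfolding sem_def
proof (rule Lub_eq_Top_if_above_multiples[OF _ assms(7)])
  show cls: "complete_lattice_semiring R"
    using assms(1) unfolding is_wARS_def by blast
  have leaf: "subtree_at T v0 = Some (Leaf (label T))"
    using assms(4,6) by simp
  fix n
  define P where "P = (graft T v0 ^^ n) (Leaf (label T))"
  have "is_rt step P" "finite_depth P" "label P = a"
    unfolding P_def
    using is_rt_funpow_graft[OF assms(2) leaf] finite_depth_funpow_graft[OF assms(3)]
      label_funpow_graft[OF leaf] assms(4)
    by simp_all
  moreover have "nle R (foldr (sadd R) (replicate n t) (szero R)) (weight step R fNF Aggr P)"
    unfolding P_def using weight_funpow_graft_ge[OF _ leaf assms(8)] cls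
    by (simp add: complete_lattice_semiring_def)
  ultimately show "\<exists>y\<in>{weight step R fNF Aggr T | T. is_rt step T \<and> finite_depth T \<and> label T = a}.
      nle R (foldr (sadd R) (replicate n t) (szero R)) y"
    by blast
qed

end
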